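(* Let $\Sigma$ be an alphabet containing at least two letters and let $f\colon\Sigma^*\to\Sigma^*$ be RCP. Then the integer $p_f=|f(c)|-|f(\varepsilon)|$ does not depend on the letter $c\in\Sigma$, and for all $x\in\Sigma^*$ and all $a\in\Sigma$, $$|f(x)|=p_f|x|+|f(\varepsilon)|,\qquad |f(x)|_a=p_f|x|_a+|f(\varepsilon)|_a.$$
   Context: $\Sigma^*$ is the free monoid over $\Sigma$ (finite words, concatenation, empty word $\varepsilon$); $|u|$ is the length of $u$ and $|u|_a$ the number of occurrences of the letter $a$ in $u$. A function $f\colon(\Sigma^* )^k\to\Sigma^*$ is RCP if for every monoid morphism $\varphi\colon\Sigma^*\to\Sigma^*$ and all $u_1,\ldots,u_k,v_1,\ldots,v_k$ with $\varphi(u_i)=\varphi(v_i)$ for all $i$, we have $\varphi(f(u_1,\ldots,u_k))=\varphi(f(v_1,\ldots,v_k))$. *)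

theory Defs
  imports Main
begin

definition monoid_morphism :: "('a list \<Rightarrow> 'a list) \<Rightarrow> bool" where
  "monoid_morphism \<phi> \<longleftrightarrow> \<phi> [] = [] \<and> (\<forall>u v. \<phi> (u @ v) = \<phi> u @ \<phi> v)"

definition RCP1 :: "('a list \<Rightarrow> 'a list) \<Rightarrow> bool" where
  "RCP1 f \<longleftrightarrow> (\<forall>\<phi> u v. monoid_morphism \<phi> \<longrightarrow> \<phi> u = \<phi> v \<longrightarrow> \<phi> (f u) = \<phi> (f v))"

definition occ :: "'a list \<Rightarrow> 'a \<Rightarrow> nat" where
  "occ u a = length (filter (\<lambda>x. x = a) u)"

end

theory Submission
  imports Defs
begin

text \<open>For a set S of letters, the morphism sending the letters of S to a fixed letter and all
  others to the empty word shows that |f(u)|_S depends only on |u|_S. With S = {a} this makes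
  |f(x)|_a a function g_a(|x|_a); with S = {a, b}, a \<noteq> b, comparing a^n b^m with a^(n+m) gives
  g_a(n) + g_b(m) = g_a(n + m) + g_b(0), which forces every g_a to be affine with one common
  slope. Summing over all letters yields the formula for |f(x)|.\<close>

definition occ_set :: "'a set \<Rightarrow> 'a list \<Rightarrow> nat" where
  "occ_set S u = length (filter (\<lambda>x. x \<in> S) u)"

lemma occ_eq_occ_set_singleton: "occ u a = occ_set {a} u"
  unfolding occ_def occ_set_def by (metis singleton_iff)

lemma occ_set_doubleton: "a \<noteq> b \<Longrightarrow> occ_set {a, b} u = occ u a + occ u b"
  unfolding occ_def occ_set_def by (induction u) auto

lemma occ_append: "occ (u @ v) a = occ u a + occ v a"
  unfolding occ_def by simp

lemma occ_replicate: "occ (replicate n a) b = (if b = a then n else 0)"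
  unfolding occ_def by simp

lemma length_eq_sum_occ: "length (u :: 'a::finite list) = (\<Sum>a\<in>UNIV. occ u a)"
proof (induction u)
  case Nil
  then show ?case by (simp add: occ_def)
next
  case (Cons x u)
  have "(\<Sum>a\<in>UNIV. occ (x # u) a) = (\<Sum>a\<in>UNIV. (if a = x then 1 else 0) + occ u a)"
    by (rule sum.cong) (auto simp: occ_def)
  also have "\<dots> = 1 + (\<Sum>a\<in>UNIV. occ u a)" by (simp add: sum.distrib)
  finally show ?case using Cons by simp
qed

lemma length_affine_if_occ_affine:
  fixes u w v :: "'a::finite list"
  assumes "\<And>a. int (occ u a) = p * int (occ w a) + int (occ v a)"
  shows "int (length u) = p * int (length w) + int (length v)"
proof -
  have "int (length u) = (\<Sum>a\<in>UNIV. p * int (occ w a) + int (occ v a))"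
    by (simp add: length_eq_sum_occ assms)
  also have "\<dots> = p * int (length w) + int (length v)"
    by (simp add: length_eq_sum_occ sum.distrib sum_distrib_left)
  finally show ?thesis .
qed

lemma monoid_morphism_replicate_occ_set: "monoid_morphism (\<lambda>w. replicate (occ_set S w) c)"
  unfolding monoid_morphism_def occ_set_def by (simp add: replicate_add)

lemma RCP1_occ_set_cong:
  assumes "RCP1 f" "occ_set S u = occ_set S v"
  shows "occ_set S (f u) = occ_set S (f v)"
proof -
  let ?\<phi> = "\<lambda>w. replicate (occ_set S w) (undefined :: 'a)"
  have "monoid_morphism ?\<phi>" by (rule monoid_morphism_replicate_occ_set)
  moreover have "?\<phi> u = ?\<phi> v" using assms(2) by simp
  ultimately have "?\<phi> (f u) = ?\<phi> (f v)"
    using assms(1) unfolding RCP1_def by blast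
  then show ?thesis by simp
qed

lemma RCP1_occ_eq_occ_replicate:
  assumes "RCP1 f"
  shows "occ (f x) a = occ (f (replicate (occ x a) a)) a"
  unfolding occ_eq_occ_set_singleton
  by (rule RCP1_occ_set_cong[OF assms]) (simp add: occ_eq_occ_set_singleton[symmetric] occ_replicate)

lemma RCP1_occ_replicate_add:
  assumes "RCP1 f" "a \<noteq> b"
  shows "occ (f (replicate n a)) a + occ (f (replicate m b)) b
           = occ (f (replicate (n + m) a)) a + occ (f []) b"
proof -
  let ?x = "replicate n a @ replicate m b"
  have "occ_set {a, b} (f ?x) = occ_set {a, b} (f (replicate (n + m) a))"
    by (rule RCP1_occ_set_cong[OF assms(1)])
       (use assms(2) in \<open>simp add: occ_set_doubleton occ_append occ_replicate\<close>)
  moreover have "occ (f (replicate (n + m) a)) b = occ (f []) b"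
    using RCP1_occ_eq_occ_replicate[OF assms(1), of "replicate (n + m) a" b] assms(2)
    by (simp add: occ_replicate)
  moreover have "occ (f ?x) a = occ (f (replicate n a)) a" "occ (f ?x) b = occ (f (replicate m b)) b"
    using RCP1_occ_eq_occ_replicate[OF assms(1), of ?x] assms(2)
    by (simp_all add: occ_append occ_replicate)
  ultimately show ?thesis
    using assms(2) by (simp add: occ_set_doubleton)
qed

definition occ_slope :: "('a list \<Rightarrow> 'a list) \<Rightarrow> 'a \<Rightarrow> int" where
  "occ_slope f b = int (occ (f [b]) b) - int (occ (f []) b)"

lemma RCP1_occ_replicate_affine:
  assumes "RCP1 f" "a \<noteq> b"
  shows "int (occ (f (replicate n a)) a) = int (occ (f []) a) + int n * occ_slope f b"
proof (induction n)
  case 0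
  then show ?case by simp
next
  case (Suc n)
  have "occ (f (replicate n a)) a + occ (f [b]) b = occ (f (replicate (Suc n) a)) a + occ (f []) b"
    using RCP1_occ_replicate_add[OF assms, of n 1] by simp
  then show ?case
    using Suc unfolding occ_slope_def by (simp add: algebra_simps)
qed

lemma RCP1_occ_slope_eq:
  assumes "RCP1 f" "a \<noteq> b"
  shows "occ_slope f a = occ_slope f b"
  using RCP1_occ_replicate_affine[OF assms, of 1] unfolding occ_slope_def by simp

lemma RCP1_occ_affine:
  assumes "RCP1 f" "a \<noteq> b"
  shows "int (occ (f x) a) = occ_slope f b * int (occ x a) + int (occ (f []) a)"
proof -
  have "occ (f x) a = occ (f (replicate (occ x a) a)) a"
    by (rule RCP1_occ_eq_occ_replicate[OF assms(1)])
  also have "int \<dots> = int (occ (f []) a) + int (occ x a) * occ_slope f b"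
    by (rule RCP1_occ_replicate_affine[OF assms])
  finally show ?thesis by (simp add: algebra_simps)
qed

lemma exists_other_if_card_ge_2:
  fixes a :: "'a::finite"
  assumes "card (UNIV :: 'a set) \<ge> 2"
  obtains b where "b \<noteq> a"
proof -
  have "UNIV \<noteq> {a}"
  proof
    assume "UNIV = {a}"
    then have "card (UNIV :: 'a set) = card {a}" by (rule arg_cong)
    with assms show False by simp
  qed
  then show ?thesis using that by blast
qed

theorem mainTheorem6:
  fixes f :: "('a::finite) list \<Rightarrow> 'a list"
  assumes "card (UNIV :: 'a set) \<ge> 2"
    and "RCP1 f"
  shows "\<exists>p::int.
           (\<forall>c::'a. int (length (f [c])) - int (length (f [])) = p) \<and>
           (\<forall>x. int (length (f x)) = p * int (length x) + int (length (f []))) \<and>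
           (\<forall>x a. int (occ (f x) a) = p * int (occ x a) + int (occ (f []) a))"
proof -
  fix a\<^sub>0 :: 'a
  define p where "p = occ_slope f a\<^sub>0"
  have occ_affine: "int (occ (f x) a) = p * int (occ x a) + int (occ (f []) a)" for x a
  proof -
    obtain b where "b \<noteq> a" using exists_other_if_card_ge_2[OF assms(1)] .
    moreover have "occ_slope f b = p"
      using RCP1_occ_slope_eq[OF assms(2), of b a\<^sub>0] unfolding p_def by (cases "b = a\<^sub>0") simp_all
    ultimately show ?thesis
      using RCP1_occ_affine[OF assms(2), of a b x] by simp
  qed
  then have length_affine: "int (length (f x)) = p * int (length x) + int (length (f []))" for x
    by (rule length_affine_if_occ_affine)
  have "int (length (f [c])) - int (length (f [])) = p" for c
    using length_affine[of "[c]"] by simp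
  with length_affine occ_affine show ?thesis
    by (intro exI[of _ p] conjI allI)
qed

end
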